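(* Let $I\subseteq R$ be an $\mathfrak m$-primary monomial ideal with $\mu_i=x_i^{d_i}\in G(I)$ for $i=1,\dots,n$. Assume that every minimal generator $x_1^{\alpha_1}\cdots x_n^{\alpha_n}\in G(I)$ which is not a corner satisfies $\frac{\alpha_1}{d_1}+\cdots+\frac{\alpha_n}{d_n}\ge \frac n2$. Then $I$ is good.
   Context: Let $\mathbb K$ be a field, $R=\mathbb K[x_1,\dots,x_n]$, $\mathfrak m=\langle x_1,\dots,x_n\rangle$, $\mathbb N=\{0,1,2,\dots\}$. A monomial $x_1^{\alpha_1}\cdots x_n^{\alpha_n}$ is identified with the point $(\alpha_1,\dots,\alpha_n)\in\mathbb N^n$. For a monomial ideal $I$, $G(I)$ denotes its (unique) minimal monomial generating set. If $I$ is an $\mathfrak m$-primary monomial ideal, then for each $i$ there is a unique $d_i\ge1$ with $x_i^{d_i}\in G(I)$; write $\mu_i=x_i^{d_i}$. A corner is a monomial whose exponent vector is $(k_1d_1,\dots,k_nd_n)$ with all $k_i\in\mathbb N$. For $(a_1,\dots,a_n)\in\mathbb N^n$ the box associated to $I$ is $B_{a_1,\dots,a_n}=([a_1d_1,(a_1+1)d_1]\times\cdots\times[a_nd_n,(a_n+1)d_n])\cap\mathbb N^n$; a monomial belongs to a box if its exponent vector does. $I$ is called good if for every integer $l\ge1$, every element of $G(I^l)$ belongs to some box $B_{a_1,\dots,a_n}$ with $a_1+\dots+a_n=l-1$; otherwise $I$ is called bad. *)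

theory Defs
  imports Complex_Main
begin

text \<open>Monomials of R = K[x_1,...,x_n] are identified with exponent vectors in N^n,
  represented as functions nat => nat vanishing outside {0..<n} (index i < n stands for x_(i+1)).
  A monomial ideal is identified with the set of exponent vectors of the monomials it contains
  (an upward closed subset of N^n); this is independent of the field K.\<close>

definition expvecs :: "nat \<Rightarrow> (nat \<Rightarrow> nat) set" where
  "expvecs n = {a. \<forall>i. n \<le> i \<longrightarrow> a i = 0}"

definition monomial_ideal :: "nat \<Rightarrow> (nat \<Rightarrow> nat) set \<Rightarrow> bool" where
  "monomial_ideal n I \<longleftrightarrow> I \<subseteq> expvecs n \<and>
     (\<forall>a\<in>I. \<forall>b\<in>expvecs n. a \<le> b \<longrightarrow> b \<in> I)"

definition pure_pow :: "nat \<Rightarrow> nat \<Rightarrow> (nat \<Rightarrow> nat)" where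
  "pure_pow i k = (\<lambda>j. if j = i then k else 0)"

definition m_primary :: "nat \<Rightarrow> (nat \<Rightarrow> nat) set \<Rightarrow> bool" where
  "m_primary n I \<longleftrightarrow> monomial_ideal n I \<and> (\<lambda>_. 0) \<notin> I \<and>
     (\<forall>i<n. \<exists>k. pure_pow i k \<in> I)"

definition mingens :: "(nat \<Rightarrow> nat) set \<Rightarrow> (nat \<Rightarrow> nat) set" where
  "mingens I = {a \<in> I. \<forall>b\<in>I. b \<le> a \<longrightarrow> b = a}"

fun ideal_pow :: "nat \<Rightarrow> (nat \<Rightarrow> nat) set \<Rightarrow> nat \<Rightarrow> (nat \<Rightarrow> nat) set" where
  "ideal_pow n I 0 = expvecs n"
| "ideal_pow n I (Suc l) = {(\<lambda>j. a j + b j) | a b. a \<in> I \<and> b \<in> ideal_pow n I l}"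

definition dexp :: "(nat \<Rightarrow> nat) set \<Rightarrow> nat \<Rightarrow> nat" where
  "dexp I i = (LEAST k. pure_pow i k \<in> I)"

definition is_corner :: "nat \<Rightarrow> (nat \<Rightarrow> nat) set \<Rightarrow> (nat \<Rightarrow> nat) \<Rightarrow> bool" where
  "is_corner n I a \<longleftrightarrow> (\<exists>k::nat \<Rightarrow> nat. \<forall>i<n. a i = k i * dexp I i)"

definition box :: "nat \<Rightarrow> (nat \<Rightarrow> nat) set \<Rightarrow> (nat \<Rightarrow> nat) \<Rightarrow> (nat \<Rightarrow> nat) set" where
  "box n I a = {b \<in> expvecs n. \<forall>i<n. a i * dexp I i \<le> b i \<and> b i \<le> (a i + 1) * dexp I i}"

definition good :: "nat \<Rightarrow> (nat \<Rightarrow> nat) set \<Rightarrow> bool" where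
  "good n I \<longleftrightarrow> (\<forall>l\<ge>1. \<forall>g\<in>mingens (ideal_pow n I l).
     \<exists>a\<in>expvecs n. (\<Sum>i<n. a i) = l - 1 \<and> g \<in> box n I a)"

end

theory Submission
  imports Defs
begin

text \<open>Write \<open>g \<in> G(I\<^sup>l)\<close> as a sum of \<open>l\<close> minimal generators of \<open>I\<close>, \<open>s\<close> of them corners and
  \<open>m\<close> not. Every corner contributes at least \<open>1\<close> to \<open>\<Sum> \<lfloor>g\<^sub>i/d\<^sub>i\<rfloor>\<close>, every non-corner at least
  \<open>n/2\<close> to \<open>\<Sum> g\<^sub>i/d\<^sub>i\<close>; since \<open>\<Sum> \<lfloor>g\<^sub>i/d\<^sub>i\<rfloor> > \<Sum> g\<^sub>i/d\<^sub>i - n\<close>, this gives \<open>\<Sum> \<lfloor>g\<^sub>i/d\<^sub>i\<rfloor> \<ge> l - 1\<close>.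
  On the other hand \<open>\<Sum> (\<lceil>g\<^sub>i/d\<^sub>i\<rceil> - 1) \<le> l - 1\<close>: otherwise a product of \<open>l\<close> of the
  generators \<open>\<mu>\<^sub>i\<close> would strictly divide \<open>g\<close>, contradicting minimality. Any integer vector \<open>a\<close> squeezed
  between these coordinatewise bounds with \<open>\<Sum> a\<^sub>i = l - 1\<close> indexes a box containing \<open>g\<close>.\<close>

definition floor_deg :: "nat \<Rightarrow> (nat \<Rightarrow> nat) set \<Rightarrow> (nat \<Rightarrow> nat) \<Rightarrow> nat" where
  "floor_deg n I g = (\<Sum>i<n. g i div dexp I i)"

definition weighted_deg :: "nat \<Rightarrow> (nat \<Rightarrow> nat) set \<Rightarrow> (nat \<Rightarrow> nat) \<Rightarrow> real" where
  "weighted_deg n I g = (\<Sum>i<n. real (g i) / real (dexp I i))"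

lemma ex_vector_between_with_sum:
  fixes lo hi :: "nat \<Rightarrow> nat"
  assumes "\<forall>i<n. lo i \<le> hi i" "(\<Sum>i<n. lo i) \<le> t" "t \<le> (\<Sum>i<n. hi i)"
  shows "\<exists>a. (\<forall>i\<ge>n. a i = 0) \<and> (\<forall>i<n. lo i \<le> a i \<and> a i \<le> hi i) \<and> (\<Sum>i<n. a i) = t"
  using assms
proof (induction n arbitrary: t)
  case 0
  then show ?case by (intro exI[of _ "\<lambda>_. 0"]) auto
next
  case (Suc n)
  define x where "x = max (lo n) (t - (\<Sum>i<n. hi i))"
  have x: "lo n \<le> x" "x \<le> hi n" "x \<le> t"
    using Suc.prems unfolding x_def by auto
  have "(\<Sum>i<n. lo i) \<le> (\<Sum>i<n. hi i)"
    using Suc.prems by (intro sum_mono) auto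
  then have "(\<Sum>i<n. lo i) \<le> t - x" "t - x \<le> (\<Sum>i<n. hi i)"
    using Suc.prems unfolding x_def by auto
  moreover have "\<forall>i<n. lo i \<le> hi i"
    using Suc.prems(1) by simp
  ultimately obtain a where a: "\<forall>i\<ge>n. a i = 0" "\<forall>i<n. lo i \<le> a i \<and> a i \<le> hi i"
    "(\<Sum>i<n. a i) = t - x"
    using Suc.IH[of "t - x"] by blast
  have "(\<Sum>i<n. (a(n := x)) i) = (\<Sum>i<n. a i)"
    by (intro sum.cong) auto
  then have "(\<Sum>i<Suc n. (a(n := x)) i) = t"
    using a(3) x by simp
  moreover have "\<forall>i<Suc n. lo i \<le> (a(n := x)) i \<and> (a(n := x)) i \<le> hi i"
    using a(2) x by (auto simp: less_Suc_eq)
  ultimately show ?case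
    using a(1) by (intro exI[of _ "a(n := x)"]) auto
qed

lemma mult_le_iff_between_divs:
  fixes a d g :: nat
  assumes "0 < d"
  shows "a * d \<le> g \<and> g \<le> (a + 1) * d \<longleftrightarrow> (g - 1) div d \<le> a \<and> a \<le> g div d"
proof (cases "g = 0")
  case False
  have "(g - 1) div d \<le> a \<longleftrightarrow> (g - 1) div d < a + 1"
    by linarith
  also have "\<dots> \<longleftrightarrow> g - 1 < (a + 1) * d"
    using assms by (rule div_less_iff_less_mult)
  also have "\<dots> \<longleftrightarrow> g \<le> (a + 1) * d"
    using False by linarith
  finally show ?thesis
    using assms by (auto simp: less_eq_div_iff_mult_less_eq)
qed (use assms in auto)

lemma m_primary_subset_expvecs: "m_primary n I \<Longrightarrow> I \<subseteq> expvecs n"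
  by (simp add: m_primary_def monomial_ideal_def)

lemma mingens_subset: "mingens I \<subseteq> I"
  by (auto simp: mingens_def)

lemma m_primary_dexp:
  assumes "m_primary n I" "i < n"
  shows "0 < dexp I i" "pure_pow i (dexp I i) \<in> I"
proof -
  obtain k where "pure_pow i k \<in> I"
    using assms unfolding m_primary_def by blast
  then show mem: "pure_pow i (dexp I i) \<in> I"
    unfolding dexp_def by (rule LeastI)
  have "pure_pow i 0 = (\<lambda>_. 0)"
    by (auto simp: pure_pow_def)
  then show "0 < dexp I i"
    using mem assms(1) unfolding m_primary_def by (metis gr0I)
qed

lemma expvecs_eqI:
  assumes "a \<in> expvecs n" "b \<in> expvecs n" "\<forall>i<n. a i = b i"
  shows "a = b"
proof
  fix i
  show "a i = b i"
    using assms by (cases "i < n") (auto simp: expvecs_def)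
qed

lemma ex_mingens_le:
  assumes "I \<subseteq> expvecs n" "a \<in> I"
  shows "\<exists>f\<in>mingens I. f \<le> a"
proof -
  obtain f where f: "f \<in> I" "f \<le> a"
    and least: "\<And>y. y \<in> I \<and> y \<le> a \<Longrightarrow> (\<Sum>i<n. f i) \<le> (\<Sum>i<n. y i)"
    using ex_has_least_nat[of "\<lambda>x. x \<in> I \<and> x \<le> a" a "\<lambda>x. \<Sum>i<n. x i"] assms(2) by auto
  have "b = f" if "b \<in> I" "b \<le> f" for b
  proof (rule expvecs_eqI)
    have le: "\<forall>i<n. b i \<le> f i"
      using \<open>b \<le> f\<close> by (simp add: le_fun_def)
    then have "(\<Sum>i<n. b i) \<le> (\<Sum>i<n. f i)"
      by (intro sum_mono) simp
    moreover have "(\<Sum>i<n. f i) \<le> (\<Sum>i<n. b i)"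
      using least that f(2) order_trans by blast
    ultimately have "(\<Sum>i<n. b i) = (\<Sum>i<n. f i)"
      by (rule antisym)
    then show "\<forall>i<n. b i = f i"
      using sum_mono_inv[of b "{..<n}" f] le by auto
    show "b \<in> expvecs n" "f \<in> expvecs n"
      using assms(1) \<open>b \<in> I\<close> f(1) by auto
  qed
  then have "f \<in> mingens I"
    using f(1) by (auto simp: mingens_def)
  then show ?thesis
    using f(2) by blast
qed

lemma ideal_pow_subset_expvecs:
  assumes "I \<subseteq> expvecs n"
  shows "ideal_pow n I l \<subseteq> expvecs n"
  using assms by (induction l) (auto simp: expvecs_def)

lemma ideal_pow_mono:
  assumes "J \<subseteq> I"
  shows "ideal_pow n J l \<subseteq> ideal_pow n I l"
  using assms by (induction l) auto

lemma ideal_pow_mingens_le: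
  assumes "I \<subseteq> expvecs n" "g \<in> ideal_pow n I l"
  shows "\<exists>g'\<in>ideal_pow n (mingens I) l. g' \<le> g"
  using assms(2)
proof (induction l arbitrary: g)
  case 0
  then show ?case by auto
next
  case (Suc l)
  then obtain a b where g: "g = (\<lambda>j. a j + b j)" "a \<in> I" "b \<in> ideal_pow n I l"
    by auto
  obtain f where "f \<in> mingens I" "f \<le> a"
    using ex_mingens_le[OF assms(1) g(2)] by blast
  moreover obtain b' where "b' \<in> ideal_pow n (mingens I) l" "b' \<le> b"
    using Suc.IH[OF g(3)] by blast
  ultimately show ?case
    unfolding g(1) by (intro bexI[of _ "\<lambda>j. f j + b' j"]) (auto simp: le_fun_def add_mono)
qed

lemma mingens_ideal_pow_mem_pow_mingens:
  assumes "I \<subseteq> expvecs n" "g \<in> mingens (ideal_pow n I l)"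
  shows "g \<in> ideal_pow n (mingens I) l"
proof -
  have "g \<in> ideal_pow n I l"
    using assms(2) mingens_subset by blast
  then obtain g' where "g' \<in> ideal_pow n (mingens I) l" "g' \<le> g"
    using ideal_pow_mingens_le[OF assms(1)] by blast
  moreover have "g' \<in> ideal_pow n I l"
    using \<open>g' \<in> ideal_pow n (mingens I) l\<close> ideal_pow_mono[OF mingens_subset] by blast
  ultimately show ?thesis
    using assms(2) by (auto simp: mingens_def)
qed

lemma corner_vector_mem_ideal_pow:
  assumes "m_primary n I" "(\<Sum>i<n. c i) = l"
  shows "(\<lambda>i. if i < n then c i * dexp I i else 0) \<in> ideal_pow n I l"
  using assms(2)
proof (induction l arbitrary: c)
  case 0
  then show ?case by (auto simp: expvecs_def)
next
  case (Suc l)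
  have "(\<Sum>i<n. c i) \<noteq> 0"
    using Suc.prems by simp
  then obtain j where j: "j < n" "0 < c j"
    by auto
  define c' where "c' = c(j := c j - 1)"
  have "(\<Sum>i<n. c i) = (\<Sum>i<n. c' i + (if i = j then 1 else 0))"
    using j by (intro sum.cong) (auto simp: c'_def)
  also have "\<dots> = (\<Sum>i<n. c' i) + 1"
    using j by (simp add: sum.distrib)
  finally have "(\<lambda>i. if i < n then c' i * dexp I i else 0) \<in> ideal_pow n I l"
    using Suc by simp
  moreover have "(\<lambda>i. if i < n then c i * dexp I i else 0) =
      (\<lambda>i. pure_pow j (dexp I j) i + (if i < n then c' i * dexp I i else 0))"
    using j by (auto simp: c'_def pure_pow_def algebra_simps)
  ultimately show ?case
    using m_primary_dexp(2)[OF assms(1) j(1)] by auto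
qed

lemma corner_degrees:
  assumes "m_primary n I" "f \<in> I" "is_corner n I f"
  shows "1 \<le> floor_deg n I f" "weighted_deg n I f = real (floor_deg n I f)"
proof -
  obtain k where k: "\<forall>i<n. f i = k i * dexp I i"
    using assms(3) unfolding is_corner_def by blast
  have dpos: "\<forall>i<n. 0 < dexp I i"
    using m_primary_dexp(1)[OF assms(1)] by blast
  have F: "floor_deg n I f = (\<Sum>i<n. k i)"
    unfolding floor_deg_def using k dpos by (intro sum.cong) auto
  have "weighted_deg n I f = (\<Sum>i<n. real (k i))"
    unfolding weighted_deg_def using k dpos by (intro sum.cong) auto
  then show "weighted_deg n I f = real (floor_deg n I f)"
    by (simp add: F)
  have "f \<noteq> (\<lambda>_. 0)"
    using assms(1,2) unfolding m_primary_def by auto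
  moreover have "f \<in> expvecs n"
    using m_primary_subset_expvecs[OF assms(1)] assms(2) by auto
  ultimately have "\<not> (\<forall>i<n. k i = 0)"
    using k expvecs_eqI[of f n "\<lambda>_. 0"] by (auto simp: expvecs_def)
  then have "(\<Sum>i<n. k i) \<noteq> 0"
    by auto
  then show "1 \<le> floor_deg n I f"
    unfolding F by linarith
qed

lemma mingens_not_corner_dim_ge_2:
  assumes "m_primary n I" "f \<in> mingens I" "\<not> is_corner n I f"
  shows "2 \<le> n"
proof (rule ccontr)
  assume "\<not> 2 \<le> n"
  moreover have "n \<noteq> 0"
    using assms(3) unfolding is_corner_def by auto
  ultimately have n: "n = 1" by simp
  have f: "f \<in> I" "f \<in> expvecs 1"
    using assms(2) m_primary_subset_expvecs[OF assms(1)] n by (auto simp: mingens_def)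
  then have "f = pure_pow 0 (f 0)"
    by (intro expvecs_eqI[of _ 1]) (auto simp: pure_pow_def expvecs_def)
  then have "dexp I 0 \<le> f 0"
    using f(1) unfolding dexp_def by (metis Least_le)
  then have "pure_pow 0 (dexp I 0) \<le> f"
    using \<open>f = pure_pow 0 (f 0)\<close> by (auto simp: pure_pow_def le_fun_def)
  then have "f = pure_pow 0 (dexp I 0)"
    using assms(2) m_primary_dexp(2)[OF assms(1)] n by (auto simp: mingens_def)
  then have "is_corner n I f"
    unfolding is_corner_def n by (intro exI[of _ "\<lambda>_. 1"]) (simp add: pure_pow_def)
  with assms(3) show False by blast
qed

lemma degree_bounds_pow_mingens:
  assumes "m_primary n I"
    and heavy: "\<forall>g\<in>mingens I. \<not> is_corner n I g \<longrightarrow>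
           (\<Sum>i<n. real (g i) / real (dexp I i)) \<ge> real n / 2"
    and "g \<in> ideal_pow n (mingens I) l"
  shows "\<exists>s m. s + m = l \<and> s \<le> floor_deg n I g
     \<and> real s + real m * real n / 2 \<le> weighted_deg n I g \<and> (0 < m \<longrightarrow> 2 \<le> n)"
  using assms(3)
proof (induction l arbitrary: g)
  case 0
  then show ?case by (auto simp: weighted_deg_def intro: sum_nonneg)
next
  case (Suc l)
  then obtain f b where g: "g = (\<lambda>j. f j + b j)" "f \<in> mingens I"
    "b \<in> ideal_pow n (mingens I) l"
    by auto
  obtain s m where sm: "s + m = l" "s \<le> floor_deg n I b"
    "real s + real m * real n / 2 \<le> weighted_deg n I b" "0 < m \<longrightarrow> 2 \<le> n"
    using Suc.IH[OF g(3)] by blast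
  have W: "weighted_deg n I g = weighted_deg n I f + weighted_deg n I b"
    unfolding weighted_deg_def g(1) by (simp add: add_divide_distrib sum.distrib)
  have F: "floor_deg n I f + floor_deg n I b \<le> floor_deg n I g"
    unfolding floor_deg_def g(1) sum.distrib[symmetric] by (intro sum_mono) (metis div_add1_eq le_add1)
  show ?case
  proof (cases "is_corner n I f")
    case True
    with corner_degrees[OF assms(1)] g(2) mingens_subset
    have "1 \<le> floor_deg n I f" "weighted_deg n I f = real (floor_deg n I f)"
      by blast+
    then have "Suc s \<le> floor_deg n I g"
      "real (Suc s) + real m * real n / 2 \<le> weighted_deg n I g"
      using sm F W by auto
    then show ?thesis
      using sm(1,4) by (metis add_Suc)
  next
    case False
    then have "real n / 2 \<le> weighted_deg n I f" "2 \<le> n"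
      using heavy g(2) mingens_not_corner_dim_ge_2[OF assms(1) g(2)]
      by (auto simp: weighted_deg_def)
    moreover have "real (Suc m) * real n / 2 = real m * real n / 2 + real n / 2"
      by (simp add: field_simps)
    ultimately have "real s + real (Suc m) * real n / 2 \<le> weighted_deg n I g"
      using sm(3) W by linarith
    then show ?thesis
      using sm F \<open>2 \<le> n\<close> by (metis add_Suc_right le_add2 order_trans)
  qed
qed

lemma floor_deg_mingens_ideal_pow_ge:
  assumes "m_primary n I"
    and "\<forall>g\<in>mingens I. \<not> is_corner n I g \<longrightarrow>
           (\<Sum>i<n. real (g i) / real (dexp I i)) \<ge> real n / 2"
    and "g \<in> mingens (ideal_pow n I l)"
  shows "l - 1 \<le> floor_deg n I g"
proof -
  obtain s m where sm: "s + m = l" "s \<le> floor_deg n I g"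
    "real s + real m * real n / 2 \<le> weighted_deg n I g" "0 < m \<longrightarrow> 2 \<le> n"
    using degree_bounds_pow_mingens[OF assms(1,2)]
      mingens_ideal_pow_mem_pow_mingens[OF m_primary_subset_expvecs[OF assms(1)] assms(3)] by blast
  show ?thesis
  proof (cases "m \<le> 1")
    case True
    then show ?thesis using sm by linarith
  next
    case False
    then have n: "2 \<le> n" using sm(4) by simp
    have "real (g i) / real (dexp I i) < real (g i div dexp I i) + 1" if "i < n" for i
    proof -
      have d: "0 < dexp I i"
        using m_primary_dexp(1)[OF assms(1) that] .
      have "g i < (g i div dexp I i + 1) * dexp I i"
        using dividend_less_div_times[OF d] by simp
      then have "real (g i) < real ((g i div dexp I i + 1) * dexp I i)"
        by (simp only: of_nat_less_iff)
      then show ?thesis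
        using d by (simp add: divide_less_eq algebra_simps)
    qed
    then have "weighted_deg n I g < (\<Sum>i<n. real (g i div dexp I i) + 1)"
      using n unfolding weighted_deg_def by (intro sum_strict_mono) (auto simp: lessThan_empty_iff)
    also have "\<dots> = real (floor_deg n I g) + real n"
      by (simp add: floor_deg_def sum.distrib)
    finally have "weighted_deg n I g < real (floor_deg n I g) + real n" .
    moreover have "0 \<le> (real m - 2) * (real n - 2)"
      using False n by simp
    ultimately have "real (s + m) < real (floor_deg n I g) + 2"
      using sm(3) by (simp add: algebra_simps)
    then show ?thesis
      using sm(1) by linarith
  qed
qed

text \<open>In \<open>nat\<close>, \<open>(g - 1) div d = \<lceil>g/d\<rceil> - 1\<close> for \<open>g > 0\<close>, and both sides are \<open>0\<close> (after truncation) for \<open>g = 0\<close>.\<close>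

lemma ceiling_sum_mingens_ideal_pow_le:
  assumes "m_primary n I" "g \<in> mingens (ideal_pow n I l)" "1 \<le> l"
  shows "(\<Sum>i<n. (g i - 1) div dexp I i) \<le> l - 1"
proof (rule ccontr)
  assume "\<not> ?thesis"
  then have "l \<le> (\<Sum>i<n. (g i - 1) div dexp I i)"
    using assms(3) by linarith
  then obtain c where c: "\<forall>i<n. c i \<le> (g i - 1) div dexp I i" "(\<Sum>i<n. c i) = l"
    using ex_vector_between_with_sum[of n "\<lambda>_. 0" "\<lambda>i. (g i - 1) div dexp I i" l] by auto
  define w where "w = (\<lambda>i. if i < n then c i * dexp I i else 0)"
  have below: "c i * dexp I i \<le> g i - 1" if "i < n" for i
    using c(1) that less_eq_div_iff_mult_less_eq[OF m_primary_dexp(1)[OF assms(1) that]]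
    by blast
  have "w \<in> ideal_pow n I l"
    unfolding w_def using corner_vector_mem_ideal_pow[OF assms(1) c(2)] .
  moreover have "w \<le> g"
    unfolding le_fun_def
  proof
    fix i
    show "w i \<le> g i"
      using below[of i] by (cases "i < n") (auto simp: w_def)
  qed
  ultimately have "w = g"
    using assms(2) by (auto simp: mingens_def)
  have "(\<Sum>i<n. c i) \<noteq> 0"
    using c(2) assms(3) by simp
  then obtain j where "j < n" "0 < c j"
    by auto
  then have "0 < c j * dexp I j"
    using m_primary_dexp(1)[OF assms(1)] by simp
  moreover have "c j * dexp I j = g j"
    using fun_cong[OF \<open>w = g\<close>, of j] \<open>j < n\<close> by (simp add: w_def)
  ultimately show False
    using below[OF \<open>j < n\<close>] by linarith
qed

theorem mainTheorem3:
  fixes n :: nat and I :: "(nat \<Rightarrow> nat) set"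
  assumes "m_primary n I"
    and "\<forall>g\<in>mingens I. \<not> is_corner n I g \<longrightarrow>
           (\<Sum>i<n. real (g i) / real (dexp I i)) \<ge> real n / 2"
  shows "good n I"
  unfolding good_def
proof (intro allI impI ballI)
  fix l g assume l: "1 \<le> l" and g: "g \<in> mingens (ideal_pow n I l)"
  have dpos: "\<forall>i<n. 0 < dexp I i"
    using m_primary_dexp(1)[OF assms(1)] by blast
  have "\<forall>i<n. (g i - 1) div dexp I i \<le> g i div dexp I i"
    by (simp add: div_le_mono)
  then obtain a where a: "\<forall>i\<ge>n. a i = 0" "(\<Sum>i<n. a i) = l - 1"
    "\<forall>i<n. (g i - 1) div dexp I i \<le> a i \<and> a i \<le> g i div dexp I i"
    using ex_vector_between_with_sum[OF _ ceiling_sum_mingens_ideal_pow_le[OF assms(1) g l]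
      floor_deg_mingens_ideal_pow_ge[OF assms g, unfolded floor_deg_def]] by blast
  have "g \<in> expvecs n"
    using g ideal_pow_subset_expvecs[OF m_primary_subset_expvecs[OF assms(1)]]
    by (auto simp: mingens_def)
  then have "g \<in> box n I a"
    using a(3) dpos mult_le_iff_between_divs by (auto simp: box_def)
  moreover have "a \<in> expvecs n"
    using a(1) by (simp add: expvecs_def)
  ultimately show "\<exists>a\<in>expvecs n. (\<Sum>i<n. a i) = l - 1 \<and> g \<in> box n I a"
    using a(2) by blast
qed

end
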